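(* Let $\Gamma$ be a set of axioms. Then $\mathsf{ICK}\oplus\Gamma$ is sound and complete with respect to the class of conditional Esakia spaces that validate $\Gamma$.
   Context: Formulas are generated by $\phi ::= p\mid\bot\mid\phi\wedge\phi\mid\phi\vee\phi\mid\phi\to\phi\mid\phi\mathrel{\Box\!\!\!\rightarrow}\phi$. $\mathsf{ICK}\oplus\Gamma$ is the smallest set of formulas containing intuitionistic propositional logic, $\Gamma$, $(p\mathrel{\Box\!\!\!\rightarrow}(q\wedge r))\leftrightarrow((p\mathrel{\Box\!\!\!\rightarrow} q)\wedge(p\mathrel{\Box\!\!\!\rightarrow} r))$ and $(p\mathrel{\Box\!\!\!\rightarrow}\top)\leftrightarrow\top$, closed under uniform substitution, modus ponens, and the congruence rules (from $p\leftrightarrow q$ infer $(p\mathrel{\Box\!\!\!\rightarrow} r)\leftrightarrow(q\mathrel{\Box\!\!\!\rightarrow} r)$ and $(r\mathrel{\Box\!\!\!\rightarrow} p)\leftrightarrow(r\mathrel{\Box\!\!\!\rightarrow} q)$). A conditional Esakia space is an Esakia space $(X,\leq,\tau)$ with relations $\{R_a\mid a \text{ a clopen upset}\}$ such that $\{x\mid R_a[x]\subseteq b\}$ is clopen for all clopen upsets $a,b$, $(\leq\circ R_a\circ\leq)=R_a$, and each $R_a[x]$ is closed. Formulas are interpreted with valuations assigning clopen upsets to proposition letters, intuitionistic clauses as in Kripke semantics, and $x\models\phi\mathrel{\Box\!\!\!\rightarrow}\psi$ iff every $y$ with $xR_{V(\phi)}y$ satisfies $\psi$; a space validates $\phi$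 if $\phi$ is true at every world under every clopen valuation. *)

theory Defs
  imports "HOL-Analysis.Abstract_Topology"
begin

datatype form =
    Var nat
  | Bot
  | Conj form form
  | Disj form form
  | Imp form form
  | Cond form form

definition Top :: form where "Top = Imp Bot Bot"

definition Iff :: "form \<Rightarrow> form \<Rightarrow> form" where
  "Iff a b = Conj (Imp a b) (Imp b a)"

primrec subst :: "(nat \<Rightarrow> form) \<Rightarrow> form \<Rightarrow> form" where
  "subst s (Var n) = s n"
| "subst s Bot = Bot"
| "subst s (Conj a b) = Conj (subst s a) (subst s b)"
| "subst s (Disj a b) = Disj (subst s a) (subst s b)"
| "subst s (Imp a b) = Imp (subst s a) (subst s b)"
| "subst s (Cond a b) = Cond (subst s a) (subst s b)"

inductive_set ICK :: "form set \<Rightarrow> form set" for \<Gamma> :: "form set" where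
  ipc1: "Imp a (Imp b a) \<in> ICK \<Gamma>"
| ipc2: "Imp (Imp a (Imp b c)) (Imp (Imp a b) (Imp a c)) \<in> ICK \<Gamma>"
| ipc3: "Imp (Conj a b) a \<in> ICK \<Gamma>"
| ipc4: "Imp (Conj a b) b \<in> ICK \<Gamma>"
| ipc5: "Imp a (Imp b (Conj a b)) \<in> ICK \<Gamma>"
| ipc6: "Imp a (Disj a b) \<in> ICK \<Gamma>"
| ipc7: "Imp b (Disj a b) \<in> ICK \<Gamma>"
| ipc8: "Imp (Imp a c) (Imp (Imp b c) (Imp (Disj a b) c)) \<in> ICK \<Gamma>"
| ipc9: "Imp Bot a \<in> ICK \<Gamma>"
| gamma: "a \<in> \<Gamma> \<Longrightarrow> a \<in> ICK \<Gamma>"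
| cmon: "Iff (Cond (Var 0) (Conj (Var 1) (Var 2)))
              (Conj (Cond (Var 0) (Var 1)) (Cond (Var 0) (Var 2))) \<in> ICK \<Gamma>"
| ctop: "Iff (Cond (Var 0) Top) Top \<in> ICK \<Gamma>"
| usubst: "a \<in> ICK \<Gamma> \<Longrightarrow> subst s a \<in> ICK \<Gamma>"
| mp: "a \<in> ICK \<Gamma> \<Longrightarrow> Imp a b \<in> ICK \<Gamma> \<Longrightarrow> b \<in> ICK \<Gamma>"
| congl: "Iff p q \<in> ICK \<Gamma> \<Longrightarrow> Iff (Cond p r) (Cond q r) \<in> ICK \<Gamma>"
| congr: "Iff p q \<in> ICK \<Gamma> \<Longrightarrow> Iff (Cond r p) (Cond r q) \<in> ICK \<Gamma>"

record 'a cspace =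
  topo :: "'a topology"
  ord  :: "'a \<Rightarrow> 'a \<Rightarrow> bool"
  rel  :: "'a set \<Rightarrow> 'a \<Rightarrow> 'a \<Rightarrow> bool"

abbreviation carrier :: "('a, 'b) cspace_scheme \<Rightarrow> 'a set" where
  "carrier S \<equiv> topspace (topo S)"

definition upset :: "('a, 'b) cspace_scheme \<Rightarrow> 'a set \<Rightarrow> bool" where
  "upset S U \<longleftrightarrow> U \<subseteq> carrier S \<and> (\<forall>x\<in>U. \<forall>y. ord S x y \<longrightarrow> y \<in> U)"

definition downclosure :: "('a, 'b) cspace_scheme \<Rightarrow> 'a set \<Rightarrow> 'a set" where
  "downclosure S U = {x \<in> carrier S. \<exists>y\<in>U. ord S x y}"

definition clopen :: "('a, 'b) cspace_scheme \<Rightarrow> 'a set \<Rightarrow> bool" where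
  "clopen S U \<longleftrightarrow> openin (topo S) U \<and> closedin (topo S) U"

definition clopen_upset :: "('a, 'b) cspace_scheme \<Rightarrow> 'a set \<Rightarrow> bool" where
  "clopen_upset S U \<longleftrightarrow> clopen S U \<and> upset S U"

definition esakia_space :: "('a, 'b) cspace_scheme \<Rightarrow> bool" where
  "esakia_space S \<longleftrightarrow>
     compact_space (topo S) \<and>
     (\<forall>x y. ord S x y \<longrightarrow> x \<in> carrier S \<and> y \<in> carrier S) \<and>
     (\<forall>x\<in>carrier S. ord S x x) \<and>
     (\<forall>x y z. ord S x y \<longrightarrow> ord S y z \<longrightarrow> ord S x z) \<and>
     (\<forall>x y. ord S x y \<longrightarrow> ord S y x \<longrightarrow> x = y) \<and>
     (\<forall>x\<in>carrier S. \<forall>y\<in>carrier S. \<not> ord S x y \<longrightarrow>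
        (\<exists>U. clopen_upset S U \<and> x \<in> U \<and> y \<notin> U)) \<and>
     (\<forall>U. clopen S U \<longrightarrow> clopen S (downclosure S U))"

definition cond_esakia_space :: "('a, 'b) cspace_scheme \<Rightarrow> bool" where
  "cond_esakia_space S \<longleftrightarrow>
     esakia_space S \<and>
     (\<forall>a. clopen_upset S a \<longrightarrow>
        (\<forall>x y. rel S a x y \<longrightarrow> x \<in> carrier S \<and> y \<in> carrier S) \<and>
        (\<forall>b. clopen_upset S b \<longrightarrow> clopen S {x \<in> carrier S. {y. rel S a x y} \<subseteq> b}) \<and>
        (\<forall>x y. rel S a x y \<longleftrightarrow> (\<exists>x' y'. ord S x x' \<and> rel S a x' y' \<and> ord S y' y)) \<and>
        (\<forall>x\<in>carrier S. closedin (topo S) {y. rel S a x y}))"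

primrec sem :: "('a, 'b) cspace_scheme \<Rightarrow> (nat \<Rightarrow> 'a set) \<Rightarrow> form \<Rightarrow> 'a set" where
  "sem S V (Var n) = V n"
| "sem S V Bot = {}"
| "sem S V (Conj a b) = sem S V a \<inter> sem S V b"
| "sem S V (Disj a b) = sem S V a \<union> sem S V b"
| "sem S V (Imp a b) = {x \<in> carrier S. \<forall>y. ord S x y \<longrightarrow> y \<in> sem S V a \<longrightarrow> y \<in> sem S V b}"
| "sem S V (Cond a b) = {x \<in> carrier S. \<forall>y. rel S (sem S V a) x y \<longrightarrow> y \<in> sem S V b}"

definition valid :: "('a, 'b) cspace_scheme \<Rightarrow> form \<Rightarrow> bool" where
  "valid S \<phi> \<longleftrightarrow> (\<forall>V. (\<forall>n. clopen_upset S (V n)) \<longrightarrow> (\<forall>x\<in>carrier S. x \<in> sem S V \<phi>))"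

end

(*
  Soundness: in a conditional Esakia space every formula denotes a clopen upset -- the
  Esakia condition makes the downset of the clopen set A - B clopen, so that implication
  is clopen, and the conditions on R_a do the same for the conditional.  Hence substituting
  formulas for variables is again a valuation, and induction on derivations applies.

  Completeness: the prime theories of ICK + Gamma, ordered by inclusion and topologised
  as a subspace of the Cantor cube of all sets of formulas, form a conditional Esakia
  space.  It is compact because the prime theories form a closed subset of the cube, and
  a compactness argument shows that its clopen upsets are exactly the truth sets of
  formulas.  By the truth lemma a formula is valid in this space iff it is a theorem.
*)
theory Submission
  imports Defs "HOL-Analysis.Function_Topology"
begin

section \<open>Soundness\<close>

lemma esakia_space_ord_carrier:
  "esakia_space S \<Longrightarrow> ord S x y \<Longrightarrow> x \<in> carrier S \<and> y \<in> carrier S"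
  by (simp add: esakia_space_def)

lemma esakia_space_ord_refl: "esakia_space S \<Longrightarrow> x \<in> carrier S \<Longrightarrow> ord S x x"
  by (simp add: esakia_space_def)

lemma esakia_space_ord_trans: "esakia_space S \<Longrightarrow> ord S x y \<Longrightarrow> ord S y z \<Longrightarrow> ord S x z"
  unfolding esakia_space_def by blast

lemma esakia_space_downclosure_clopen:
  "esakia_space S \<Longrightarrow> clopen S U \<Longrightarrow> clopen S (downclosure S U)"
  by (simp add: esakia_space_def)

lemma cond_esakia_space_esakia: "cond_esakia_space S \<Longrightarrow> esakia_space S"
  by (simp add: cond_esakia_space_def)

lemma cond_esakia_space_rel_carrier:
  "cond_esakia_space S \<Longrightarrow> clopen_upset S a \<Longrightarrow> rel S a x y \<Longrightarrow> y \<in> carrier S"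
  unfolding cond_esakia_space_def by blast

lemma cond_esakia_space_box_clopen:
  "cond_esakia_space S \<Longrightarrow> clopen_upset S a \<Longrightarrow> clopen_upset S b \<Longrightarrow>
     clopen S {x \<in> carrier S. {y. rel S a x y} \<subseteq> b}"
  unfolding cond_esakia_space_def by blast

lemma cond_esakia_space_ord_rel:
  assumes S: "cond_esakia_space S" and a: "clopen_upset S a"
    and "ord S x x'" and "rel S a x' y"
  shows "rel S a x y"
proof -
  have "ord S y y"
    using esakia_space_ord_refl cond_esakia_space_esakia cond_esakia_space_rel_carrier assms
    by metis
  then show ?thesis
    using assms unfolding cond_esakia_space_def by blast
qed

lemma sem_clopen_upset:
  assumes S: "cond_esakia_space S" and V: "\<forall>n. clopen_upset S (V n)"
  shows "clopen_upset S (sem S V \<phi>)"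
proof (induction \<phi>)
  case (Imp \<phi> \<psi>)
  have E: "esakia_space S" using S by (rule cond_esakia_space_esakia)
  let ?A = "sem S V \<phi>" and ?B = "sem S V \<psi>"
  have "clopen S (?A - ?B)"
    using Imp by (auto simp: clopen_upset_def clopen_def intro: openin_diff closedin_diff)
  then have "clopen S (downclosure S (?A - ?B))"
    by (rule esakia_space_downclosure_clopen[OF E])
  moreover have "sem S V (Imp \<phi> \<psi>) = carrier S - downclosure S (?A - ?B)"
    by (auto simp: downclosure_def)
  ultimately have "clopen S (sem S V (Imp \<phi> \<psi>))"
    by (auto simp: clopen_def intro: openin_diff closedin_diff)
  moreover have "upset S (sem S V (Imp \<phi> \<psi>))"
    using esakia_space_ord_trans[OF E] esakia_space_ord_carrier[OF E]
    by (auto simp: upset_def)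
  ultimately show ?case by (simp add: clopen_upset_def)
next
  case (Cond \<phi> \<psi>)
  have "sem S V (Cond \<phi> \<psi>) = {x \<in> carrier S. {y. rel S (sem S V \<phi>) x y} \<subseteq> sem S V \<psi>}"
    by auto
  then have "clopen S (sem S V (Cond \<phi> \<psi>))"
    using cond_esakia_space_box_clopen[OF S] Cond by simp
  moreover have "upset S (sem S V (Cond \<phi> \<psi>))"
    using cond_esakia_space_ord_rel[OF S Cond(1)] esakia_space_ord_carrier[OF cond_esakia_space_esakia[OF S]]
    by (auto simp: upset_def)
  ultimately show ?case by (simp add: clopen_upset_def)
qed (use V in \<open>auto simp: clopen_upset_def clopen_def upset_def\<close>)

lemma sem_upset:
  "cond_esakia_space S \<Longrightarrow> \<forall>n. clopen_upset S (V n) \<Longrightarrow> x \<in> sem S V \<phi> \<Longrightarrow> ord S x y \<Longrightarrow> y \<in> sem S V \<phi>"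
  using sem_clopen_upset unfolding clopen_upset_def upset_def by blast

lemma sem_subset_carrier:
  "cond_esakia_space S \<Longrightarrow> \<forall>n. clopen_upset S (V n) \<Longrightarrow> sem S V \<phi> \<subseteq> carrier S"
  using sem_clopen_upset unfolding clopen_upset_def upset_def by blast

lemma validI:
  "(\<And>(V :: nat \<Rightarrow> _) x. \<forall>n. clopen_upset S (V n) \<Longrightarrow> x \<in> carrier S \<Longrightarrow> x \<in> sem S V \<phi>) \<Longrightarrow> valid S \<phi>"
  by (simp add: valid_def)

lemma validD: "valid S \<phi> \<Longrightarrow> \<forall>n. clopen_upset S (V n) \<Longrightarrow> x \<in> carrier S \<Longrightarrow> x \<in> sem S V \<phi>"
  by (simp add: valid_def)

lemma sem_subst: "sem S V (subst s \<phi>) = sem S (\<lambda>n. sem S V (s n)) \<phi>"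
  by (induction \<phi>) simp_all

lemma valid_Iff_iff:
  assumes S: "cond_esakia_space S"
  shows "valid S (Iff p q) \<longleftrightarrow> (\<forall>V. (\<forall>n. clopen_upset S (V n)) \<longrightarrow> sem S V p = sem S V q)"
proof
  assume valid: "valid S (Iff p q)"
  show "\<forall>V. (\<forall>n. clopen_upset S (V n)) \<longrightarrow> sem S V p = sem S V q"
  proof (intro allI impI)
    fix V :: "nat \<Rightarrow> _" assume V: "\<forall>n. clopen_upset S (V n)"
    have "x \<in> sem S V p \<longleftrightarrow> x \<in> sem S V q" if "x \<in> carrier S" for x
      using validD[OF valid V that] esakia_space_ord_refl[OF cond_esakia_space_esakia[OF S] that]
      unfolding Iff_def by auto
    then show "sem S V p = sem S V q"
      using sem_subset_carrier[OF S V] by blast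
  qed
next
  assume eq: "\<forall>V. (\<forall>n. clopen_upset S (V n)) \<longrightarrow> sem S V p = sem S V q"
  show "valid S (Iff p q)"
  proof (rule validI)
    fix V :: "nat \<Rightarrow> _" and x assume "\<forall>n. clopen_upset S (V n)" and "x \<in> carrier S"
    then show "x \<in> sem S V (Iff p q)"
      using eq by (simp add: Iff_def)
  qed
qed

lemma sem_ICK_axioms:
  assumes S: "cond_esakia_space S" and V: "\<forall>n. clopen_upset S (V n)" and x: "x \<in> carrier S"
  shows "x \<in> sem S V (Imp a (Imp b a))"
    and "x \<in> sem S V (Imp (Imp a (Imp b c)) (Imp (Imp a b) (Imp a c)))"
    and "x \<in> sem S V (Imp (Conj a b) a)"
    and "x \<in> sem S V (Imp (Conj a b) b)"
    and "x \<in> sem S V (Imp a (Imp b (Conj a b)))"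
    and "x \<in> sem S V (Imp a (Disj a b))"
    and "x \<in> sem S V (Imp b (Disj a b))"
    and "x \<in> sem S V (Imp (Imp a c) (Imp (Imp b c) (Imp (Disj a b) c)))"
    and "x \<in> sem S V (Imp Bot a)"
    and "x \<in> sem S V (Iff (Cond (Var 0) (Conj (Var 1) (Var 2)))
                            (Conj (Cond (Var 0) (Var 1)) (Cond (Var 0) (Var 2))))"
    and "x \<in> sem S V (Iff (Cond (Var 0) Top) Top)"
proof -
  have E: "esakia_space S" using S by (rule cond_esakia_space_esakia)
  note refl = esakia_space_ord_refl[OF E] and trans = esakia_space_ord_trans[OF E]
    and ord_carrier = esakia_space_ord_carrier[OF E] and up = sem_upset[OF S V]
  show "x \<in> sem S V (Imp a (Imp b a))"
    using x trans ord_carrier up by auto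
  show "x \<in> sem S V (Imp (Imp a (Imp b c)) (Imp (Imp a b) (Imp a c)))"
    using x refl trans ord_carrier by (simp; meson)
  show "x \<in> sem S V (Imp (Conj a b) a)" "x \<in> sem S V (Imp (Conj a b) b)"
    "x \<in> sem S V (Imp a (Disj a b))" "x \<in> sem S V (Imp b (Disj a b))" "x \<in> sem S V (Imp Bot a)"
    using x by auto
  show "x \<in> sem S V (Imp a (Imp b (Conj a b)))"
    using x ord_carrier up by auto
  show "x \<in> sem S V (Imp (Imp a c) (Imp (Imp b c) (Imp (Disj a b) c)))"
    using x trans ord_carrier by auto
  show "x \<in> sem S V (Iff (Cond (Var 0) (Conj (Var 1) (Var 2)))
                            (Conj (Cond (Var 0) (Var 1)) (Cond (Var 0) (Var 2))))"
    using x ord_carrier by (auto simp: Iff_def)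
  show "x \<in> sem S V (Iff (Cond (Var 0) Top) Top)"
    using x cond_esakia_space_rel_carrier[OF S] V by (auto simp: Iff_def Top_def)
qed

lemma ICK_sound:
  assumes "\<phi> \<in> ICK \<Gamma>" and S: "cond_esakia_space S" and \<Gamma>: "\<forall>\<gamma>\<in>\<Gamma>. valid S \<gamma>"
  shows "valid S \<phi>"
  using assms(1)
proof (induction rule: ICK.induct)
  case (gamma a)
  then show ?case using \<Gamma> by blast
next
  case (usubst a s)
  show ?case
  proof (rule validI)
    fix V :: "nat \<Rightarrow> _" and x assume "\<forall>n. clopen_upset S (V n)" and "x \<in> carrier S"
    then show "x \<in> sem S V (subst s a)"
      using usubst.IH sem_clopen_upset[OF S] by (simp add: sem_subst validD)
  qed
next
  case (mp a b)
  show ?case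
  proof (rule validI)
    fix V :: "nat \<Rightarrow> _" and x assume "\<forall>n. clopen_upset S (V n)" and x: "x \<in> carrier S"
    then have "x \<in> sem S V a" and "x \<in> sem S V (Imp a b)"
      using mp.IH by (blast intro: validD)+
    then show "x \<in> sem S V b"
      using esakia_space_ord_refl[OF cond_esakia_space_esakia[OF S] x] by simp
  qed
next
  case (congl p q r)
  then show ?case by (simp add: valid_Iff_iff[OF S])
next
  case (congr p q r)
  then show ?case by (simp add: valid_Iff_iff[OF S])
qed (rule validI, rule sem_ICK_axioms[OF S]; assumption)+

section \<open>Theories and the Lindenbaum lemma\<close>

text \<open>Consequence from hypotheses: only modus ponens is applied to the hypotheses in \<open>D\<close>
  (substitution and the congruence rules act on theorems only), so the deduction theorem holds.\<close>

inductive_set Cn :: "form set \<Rightarrow> form set \<Rightarrow> form set" for \<Gamma> D :: "form set" where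
  ax: "a \<in> ICK \<Gamma> \<Longrightarrow> a \<in> Cn \<Gamma> D"
| hyp: "a \<in> D \<Longrightarrow> a \<in> Cn \<Gamma> D"
| mp: "a \<in> Cn \<Gamma> D \<Longrightarrow> Imp a b \<in> Cn \<Gamma> D \<Longrightarrow> b \<in> Cn \<Gamma> D"

definition ick_theory :: "form set \<Rightarrow> form set \<Rightarrow> bool" where
  "ick_theory \<Gamma> T \<longleftrightarrow> ICK \<Gamma> \<subseteq> T \<and> (\<forall>a b. a \<in> T \<longrightarrow> Imp a b \<in> T \<longrightarrow> b \<in> T)"

definition prime_theory :: "form set \<Rightarrow> form set \<Rightarrow> bool" where
  "prime_theory \<Gamma> T \<longleftrightarrow>
     ick_theory \<Gamma> T \<and> Bot \<notin> T \<and> (\<forall>a b. Disj a b \<in> T \<longrightarrow> a \<in> T \<or> b \<in> T)"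

lemma ick_theoryI:
  "ICK \<Gamma> \<subseteq> T \<Longrightarrow> (\<And>a b. a \<in> T \<Longrightarrow> Imp a b \<in> T \<Longrightarrow> b \<in> T) \<Longrightarrow> ick_theory \<Gamma> T"
  unfolding ick_theory_def by blast

lemma ick_theory_ICK: "ick_theory \<Gamma> T \<Longrightarrow> a \<in> ICK \<Gamma> \<Longrightarrow> a \<in> T"
  unfolding ick_theory_def by blast

lemma ick_theory_mp: "ick_theory \<Gamma> T \<Longrightarrow> a \<in> T \<Longrightarrow> Imp a b \<in> T \<Longrightarrow> b \<in> T"
  unfolding ick_theory_def by blast

lemma ick_theory_mp_ICK: "ick_theory \<Gamma> T \<Longrightarrow> Imp a b \<in> ICK \<Gamma> \<Longrightarrow> a \<in> T \<Longrightarrow> b \<in> T"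
  using ick_theory_ICK ick_theory_mp by blast

lemma prime_theory_ick_theory: "prime_theory \<Gamma> T \<Longrightarrow> ick_theory \<Gamma> T"
  unfolding prime_theory_def by blast

lemma ick_theory_ICK_self: "ick_theory \<Gamma> (ICK \<Gamma>)"
  by (rule ick_theoryI) (auto intro: ICK.mp)

lemma ick_theory_Cn: "ick_theory \<Gamma> (Cn \<Gamma> D)"
  by (rule ick_theoryI) (auto intro: Cn.intros)

lemma Cn_least: "ick_theory \<Gamma> T \<Longrightarrow> D \<subseteq> T \<Longrightarrow> Cn \<Gamma> D \<subseteq> T"
proof
  fix a assume "ick_theory \<Gamma> T" and "D \<subseteq> T" and "a \<in> Cn \<Gamma> D"
  from \<open>a \<in> Cn \<Gamma> D\<close> show "a \<in> T"
    by induction (use \<open>ick_theory \<Gamma> T\<close> \<open>D \<subseteq> T\<close> in \<open>auto intro: ick_theory_ICK ick_theory_mp\<close>)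
qed

lemma Cn_ick_theory_eq: "ick_theory \<Gamma> T \<Longrightarrow> Cn \<Gamma> T = T"
  using Cn_least Cn.hyp by blast

lemma Cn_empty: "Cn \<Gamma> {} = ICK \<Gamma>"
  using Cn_least[OF ick_theory_ICK_self] Cn.ax by blast

lemma ICK_Imp_refl: "Imp a a \<in> ICK \<Gamma>"
  using ICK.mp[OF ICK.ipc1 ICK.mp[OF ICK.ipc1 ICK.ipc2]] .

lemma Cn_deduction: "b \<in> Cn \<Gamma> (insert a D) \<Longrightarrow> Imp a b \<in> Cn \<Gamma> D"
proof (induction rule: Cn.induct)
  case (ax c)
  then show ?case by (blast intro: Cn.intros ICK.ipc1)
next
  case (hyp c)
  then show ?case by (blast intro: Cn.intros ICK.ipc1 ICK_Imp_refl)
next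
  case (mp c d)
  then show ?case by (blast intro: Cn.intros ICK.ipc2)
qed

lemma ICK_deduction: "b \<in> Cn \<Gamma> {a} \<Longrightarrow> Imp a b \<in> ICK \<Gamma>"
  using Cn_deduction[of b \<Gamma> a "{}"] by (simp add: Cn_empty)

lemma ICK_Top: "Top \<in> ICK \<Gamma>"
  unfolding Top_def by (rule ICK.ipc9)

lemma ICK_IffI: "Imp a b \<in> ICK \<Gamma> \<Longrightarrow> Imp b a \<in> ICK \<Gamma> \<Longrightarrow> Iff a b \<in> ICK \<Gamma>"
  unfolding Iff_def by (rule ICK.mp[OF _ ICK.mp[OF _ ICK.ipc5]])

lemma ICK_IffD1: "Iff a b \<in> ICK \<Gamma> \<Longrightarrow> Imp a b \<in> ICK \<Gamma>"
  unfolding Iff_def by (rule ICK.mp[OF _ ICK.ipc3])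

lemma ICK_IffD2: "Iff a b \<in> ICK \<Gamma> \<Longrightarrow> Imp b a \<in> ICK \<Gamma>"
  unfolding Iff_def by (rule ICK.mp[OF _ ICK.ipc4])

lemma ick_theory_Conj_iff: "ick_theory \<Gamma> T \<Longrightarrow> Conj a b \<in> T \<longleftrightarrow> a \<in> T \<and> b \<in> T"
  using ick_theory_mp_ICK[of \<Gamma> T, OF _ ICK.ipc3] ick_theory_mp_ICK[of \<Gamma> T, OF _ ICK.ipc4]
    ick_theory_mp[of \<Gamma> T _ "Conj a b", OF _ _ ick_theory_mp_ICK[of \<Gamma> T, OF _ ICK.ipc5]]
  by blast

lemma prime_theory_Disj_iff: "prime_theory \<Gamma> T \<Longrightarrow> Disj a b \<in> T \<longleftrightarrow> a \<in> T \<or> b \<in> T"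
  using ick_theory_mp_ICK[OF _ ICK.ipc6] ick_theory_mp_ICK[OF _ ICK.ipc7]
  unfolding prime_theory_def by blast

lemma prime_theory_Bot: "prime_theory \<Gamma> T \<Longrightarrow> Bot \<notin> T"
  unfolding prime_theory_def by blast

lemma ick_theory_finite_conjunction:
  "finite A \<Longrightarrow> \<exists>\<phi>. \<forall>T. ick_theory \<Gamma> T \<longrightarrow> (\<phi> \<in> T \<longleftrightarrow> A \<subseteq> T)"
proof (induction rule: finite_induct)
  case empty
  show ?case using ick_theory_ICK ICK_Top by blast
next
  case (insert a A)
  then obtain \<phi> where "\<forall>T. ick_theory \<Gamma> T \<longrightarrow> (\<phi> \<in> T \<longleftrightarrow> A \<subseteq> T)" by blast
  then have "\<forall>T. ick_theory \<Gamma> T \<longrightarrow> (Conj a \<phi> \<in> T \<longleftrightarrow> insert a A \<subseteq> T)"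
    by (simp add: ick_theory_Conj_iff)
  then show ?case by blast
qed

lemma prime_theory_finite_disjunction:
  "finite A \<Longrightarrow> \<exists>\<phi>. \<forall>T. prime_theory \<Gamma> T \<longrightarrow> (\<phi> \<in> T \<longleftrightarrow> A \<inter> T \<noteq> {})"
proof (induction rule: finite_induct)
  case empty
  show ?case using prime_theory_Bot by blast
next
  case (insert a A)
  then obtain \<phi> where "\<forall>T. prime_theory \<Gamma> T \<longrightarrow> (\<phi> \<in> T \<longleftrightarrow> A \<inter> T \<noteq> {})" by blast
  then have "\<forall>T. prime_theory \<Gamma> T \<longrightarrow> (Disj a \<phi> \<in> T \<longleftrightarrow> insert a A \<inter> T \<noteq> {})"
    by (simp add: prime_theory_Disj_iff)
  then show ?case by blast
qed

lemma ick_theory_Union_chain: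
  assumes "C \<noteq> {}" and theories: "\<forall>T\<in>C. ick_theory \<Gamma> T"
    and chain: "\<forall>X\<in>C. \<forall>Y\<in>C. X \<subseteq> Y \<or> Y \<subseteq> X"
  shows "ick_theory \<Gamma> (\<Union>C)"
proof (rule ick_theoryI)
  show "ICK \<Gamma> \<subseteq> \<Union>C"
    using assms(1) theories unfolding ick_theory_def by blast
next
  fix a b assume "a \<in> \<Union>C" and "Imp a b \<in> \<Union>C"
  then obtain X Y where "X \<in> C" "Y \<in> C" "a \<in> X" "Imp a b \<in> Y" by blast
  then obtain Z where "Z \<in> C" "a \<in> Z" "Imp a b \<in> Z"
    using chain by blast
  then have "b \<in> Z" using theories ick_theory_mp by blast
  then show "b \<in> \<Union>C" using \<open>Z \<in> C\<close> by blast
qed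

lemma maximal_ick_theory_prime:
  assumes M: "ick_theory \<Gamma> M" and "\<psi> \<notin> M"
    and maximal: "\<And>T. ick_theory \<Gamma> T \<Longrightarrow> M \<subseteq> T \<Longrightarrow> \<psi> \<notin> T \<Longrightarrow> T = M"
  shows "prime_theory \<Gamma> M"
proof -
  have Imp_\<psi>: "Imp a \<psi> \<in> M" if "a \<notin> M" for a
  proof -
    have "M \<subseteq> Cn \<Gamma> (insert a M)" and "a \<in> Cn \<Gamma> (insert a M)"
      by (auto intro: Cn.hyp)
    then have "\<psi> \<in> Cn \<Gamma> (insert a M)"
      using maximal[OF ick_theory_Cn] that by blast
    then have "Imp a \<psi> \<in> Cn \<Gamma> M" by (rule Cn_deduction)
    then show ?thesis using Cn_ick_theory_eq[OF M] by simp
  qed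
  have "Bot \<notin> M"
    using ick_theory_mp_ICK[OF M ICK.ipc9] \<open>\<psi> \<notin> M\<close> by blast
  moreover have "a \<in> M \<or> b \<in> M" if "Disj a b \<in> M" for a b
  proof (rule ccontr)
    assume "\<not> (a \<in> M \<or> b \<in> M)"
    then have "Imp a \<psi> \<in> M" and "Imp b \<psi> \<in> M" using Imp_\<psi> by auto
    then have "Imp (Disj a b) \<psi> \<in> M"
      using ick_theory_ICK[OF M ICK.ipc8] ick_theory_mp[OF M] by blast
    then show False using that ick_theory_mp[OF M] \<open>\<psi> \<notin> M\<close> by blast
  qed
  ultimately show ?thesis
    using M unfolding prime_theory_def by blast
qed

lemma lindenbaum:
  assumes "ick_theory \<Gamma> T" and "\<psi> \<notin> T"
  shows "\<exists>P. prime_theory \<Gamma> P \<and> T \<subseteq> P \<and> \<psi> \<notin> P"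
proof -
  define \<A> where "\<A> = {S. ick_theory \<Gamma> S \<and> T \<subseteq> S \<and> \<psi> \<notin> S}"
  have "\<Union>C \<in> \<A>" if "C \<noteq> {}" and "subset.chain \<A> C" for C
  proof -
    have C: "\<forall>S\<in>C. ick_theory \<Gamma> S \<and> T \<subseteq> S \<and> \<psi> \<notin> S"
      and chain: "\<forall>X\<in>C. \<forall>Y\<in>C. X \<subseteq> Y \<or> Y \<subseteq> X"
      using \<open>subset.chain \<A> C\<close> unfolding \<A>_def subset_chain_def by blast+
    have "ick_theory \<Gamma> (\<Union>C)"
      using ick_theory_Union_chain[OF \<open>C \<noteq> {}\<close> _ chain] C by blast
    moreover have "T \<subseteq> \<Union>C"
      using \<open>C \<noteq> {}\<close> C by blast
    moreover have "\<psi> \<notin> \<Union>C"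
      using C by blast
    ultimately show ?thesis unfolding \<A>_def by blast
  qed
  moreover have "T \<in> \<A>"
    using assms unfolding \<A>_def by blast
  ultimately obtain M where "M \<in> \<A>" and M_maximal: "\<forall>X\<in>\<A>. M \<subseteq> X \<longrightarrow> X = M"
    using subset_Zorn_nonempty[of \<A>] by blast
  then have M: "ick_theory \<Gamma> M" "T \<subseteq> M" "\<psi> \<notin> M"
    unfolding \<A>_def by blast+
  have "prime_theory \<Gamma> M"
  proof (rule maximal_ick_theory_prime[OF M(1,3)])
    fix S assume "ick_theory \<Gamma> S" "M \<subseteq> S" "\<psi> \<notin> S"
    then have "S \<in> \<A>" using M(2) unfolding \<A>_def by blast
    then show "S = M" using M_maximal \<open>M \<subseteq> S\<close> by blast
  qed
  then show ?thesis using M(2,3) by blast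
qed

lemma prime_theory_Imp_witness:
  assumes T: "ick_theory \<Gamma> T" and "Imp a b \<notin> T"
  shows "\<exists>P. prime_theory \<Gamma> P \<and> T \<subseteq> P \<and> a \<in> P \<and> b \<notin> P"
proof -
  have "b \<notin> Cn \<Gamma> (insert a T)"
    using Cn_deduction Cn_ick_theory_eq[OF T] \<open>Imp a b \<notin> T\<close> by blast
  then obtain P where "prime_theory \<Gamma> P" "Cn \<Gamma> (insert a T) \<subseteq> P" "b \<notin> P"
    using lindenbaum[OF ick_theory_Cn] by blast
  moreover have "insert a T \<subseteq> Cn \<Gamma> (insert a T)"
    by (auto intro: Cn.hyp)
  ultimately show ?thesis by blast
qed

lemma ICK_Cond_Conj: "Iff (Cond p (Conj a b)) (Conj (Cond p a) (Cond p b)) \<in> ICK \<Gamma>"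
  using ICK.usubst[OF ICK.cmon, where s = "\<lambda>n. if n = 0 then p else if n = 1 then a else b"]
  by (simp add: Iff_def)

lemma ICK_Cond_Top: "Iff (Cond p Top) Top \<in> ICK \<Gamma>"
  using ICK.usubst[OF ICK.ctop, where s = "\<lambda>n. p"] by (simp add: Iff_def Top_def)

lemma ICK_Cond_nec:
  assumes "a \<in> ICK \<Gamma>"
  shows "Cond p a \<in> ICK \<Gamma>"
proof -
  have "Iff Top a \<in> ICK \<Gamma>"
    by (rule ICK_IffI[OF ICK.mp[OF assms ICK.ipc1] ICK.mp[OF ICK_Top ICK.ipc1]])
  then have "Iff (Cond p Top) (Cond p a) \<in> ICK \<Gamma>"
    by (rule ICK.congr)
  moreover have "Cond p Top \<in> ICK \<Gamma>"
    by (rule ICK.mp[OF ICK_Top ICK_IffD2[OF ICK_Cond_Top]])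
  ultimately show ?thesis
    using ICK.mp ICK_IffD1 by blast
qed

lemma ick_theory_Cond_mono:
  assumes T: "ick_theory \<Gamma> T" and ab: "Imp a b \<in> ICK \<Gamma>" and "Cond p a \<in> T"
  shows "Cond p b \<in> T"
proof -
  have a: "a \<in> Cn \<Gamma> {a}" by (rule Cn.hyp) simp
  then have "b \<in> Cn \<Gamma> {a}" by (rule Cn.mp[OF _ Cn.ax[OF ab]])
  then have "Conj a b \<in> Cn \<Gamma> {a}" using a by (rule Cn.mp[OF _ Cn.mp[OF _ Cn.ax[OF ICK.ipc5]]])
  then have "Iff a (Conj a b) \<in> ICK \<Gamma>" by (rule ICK_IffI[OF ICK_deduction ICK.ipc3])
  then have "Cond p (Conj a b) \<in> T"
    by (rule ick_theory_mp_ICK[OF T ICK_IffD1[OF ICK.congr]]) fact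
  then have "Conj (Cond p a) (Cond p b) \<in> T"
    by (rule ick_theory_mp_ICK[OF T ICK_IffD1[OF ICK_Cond_Conj]])
  then show ?thesis by (simp add: ick_theory_Conj_iff[OF T])
qed

lemma ick_theory_Cond_mp:
  assumes T: "ick_theory \<Gamma> T" and "Cond p a \<in> T" and "Cond p (Imp a b) \<in> T"
  shows "Cond p b \<in> T"
proof -
  have "Conj (Cond p a) (Cond p (Imp a b)) \<in> T"
    using assms(2,3) by (simp add: ick_theory_Conj_iff[OF T])
  then have "Cond p (Conj a (Imp a b)) \<in> T"
    by (rule ick_theory_mp_ICK[OF T ICK_IffD2[OF ICK_Cond_Conj]])
  moreover
  have c: "Conj a (Imp a b) \<in> Cn \<Gamma> {Conj a (Imp a b)}" by (rule Cn.hyp) simp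
  have "b \<in> Cn \<Gamma> {Conj a (Imp a b)}"
    by (rule Cn.mp[OF Cn.mp[OF c Cn.ax[OF ICK.ipc3]] Cn.mp[OF c Cn.ax[OF ICK.ipc4]]])
  ultimately show ?thesis
    by (rule ick_theory_Cond_mono[OF T ICK_deduction, rotated])
qed

lemma ick_theory_Cond_cong:
  assumes "ick_theory \<Gamma> T" and "Iff p q \<in> ICK \<Gamma>" and "Cond p a \<in> T"
  shows "Cond q a \<in> T"
  by (rule ick_theory_mp_ICK[OF assms(1) ICK_IffD1[OF ICK.congl[OF assms(2)]] assms(3)])

lemma ick_theory_Cond_consequents:
  assumes T: "ick_theory \<Gamma> T"
  shows "ick_theory \<Gamma> {a. Cond p a \<in> T}"
proof (rule ick_theoryI)
  show "ICK \<Gamma> \<subseteq> {a. Cond p a \<in> T}"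
    using ick_theory_ICK[OF T ICK_Cond_nec] by blast
  show "b \<in> {a. Cond p a \<in> T}" if "a \<in> {a. Cond p a \<in> T}" and "Imp a b \<in> {a. Cond p a \<in> T}" for a b
    using ick_theory_Cond_mp[OF T] that by blast
qed

section \<open>The canonical space\<close>

lemma compact_space_closedin_finite_subcover:
  assumes "compact_space X" and "closedin X S" and "\<And>i. i \<in> I \<Longrightarrow> openin X (f i)"
    and "S \<subseteq> (\<Union>i\<in>I. f i)"
  shows "\<exists>J. finite J \<and> J \<subseteq> I \<and> S \<subseteq> (\<Union>i\<in>J. f i)"
proof -
  obtain \<F> where "finite \<F>" "\<F> \<subseteq> f ` I" "S \<subseteq> \<Union>\<F>"
    using compactinD[OF closedin_compact_space[OF assms(1,2)], of "f ` I"] assms(3,4) by blast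
  moreover obtain J where "J \<subseteq> I" "finite J" "\<F> = f ` J"
    using finite_subset_image[OF \<open>finite \<F>\<close> \<open>\<F> \<subseteq> f ` I\<close>] by blast
  ultimately show ?thesis by blast
qed

definition cantor_cube :: "(form \<Rightarrow> bool) topology" where
  "cantor_cube = product_topology (\<lambda>_. discrete_topology UNIV) UNIV"

definition prime_theories :: "form set \<Rightarrow> form set set" where
  "prime_theories \<Gamma> = {T. prime_theory \<Gamma> T}"

definition truth_set :: "form set \<Rightarrow> form \<Rightarrow> form set set" where
  "truth_set \<Gamma> \<phi> = {T. prime_theory \<Gamma> T \<and> \<phi> \<in> T}"

text \<open>The truth sets and their complements form a subbasis.\<close>

definition canonical_topology :: "form set \<Rightarrow> form set topology" where
  "canonical_topology \<Gamma> = pullback_topology (prime_theories \<Gamma>) (\<lambda>T \<chi>. \<chi> \<in> T) cantor_cube"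

lemma mem_prime_theories [simp]: "T \<in> prime_theories \<Gamma> \<longleftrightarrow> prime_theory \<Gamma> T"
  by (simp add: prime_theories_def)

lemma mem_truth_set [simp]: "T \<in> truth_set \<Gamma> \<phi> \<longleftrightarrow> prime_theory \<Gamma> T \<and> \<phi> \<in> T"
  by (simp add: truth_set_def)

lemma topspace_cantor_cube [simp]: "topspace cantor_cube = UNIV"
  by (simp add: cantor_cube_def)

lemma compact_space_cantor_cube: "compact_space cantor_cube"
  by (simp add: cantor_cube_def compact_space_product_topology compact_space_discrete_topology)

lemma clopen_cantor_cube_coordinate:
  shows "openin cantor_cube {P. P \<phi> \<in> B}" and "closedin cantor_cube {P. P \<phi> \<in> B}"
proof -
  have "continuous_map cantor_cube (discrete_topology UNIV) (\<lambda>P. P \<phi>)"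
    unfolding cantor_cube_def by (rule continuous_map_product_projection) simp
  then show "openin cantor_cube {P. P \<phi> \<in> B}" and "closedin cantor_cube {P. P \<phi> \<in> B}"
    using openin_continuous_map_preimage closedin_continuous_map_preimage by fastforce+
qed

lemma cantor_cube_basis:
  assumes "openin cantor_cube W" and "P \<in> W"
  shows "\<exists>F. finite F \<and> {Q. \<forall>\<phi>\<in>F. Q \<phi> = P \<phi>} \<subseteq> W"
proof -
  obtain U where "finite {\<phi> \<in> UNIV. U \<phi> \<noteq> topspace (discrete_topology UNIV)}"
      and U: "P \<in> Pi\<^sub>E UNIV U" "Pi\<^sub>E UNIV U \<subseteq> W"
    using assms unfolding cantor_cube_def openin_product_topology_alt by blast
  then have "finite {\<phi>. U \<phi> \<noteq> UNIV}"
    by simp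
  moreover have "{Q. \<forall>\<phi>\<in>{\<phi>. U \<phi> \<noteq> UNIV}. Q \<phi> = P \<phi>} \<subseteq> W"
  proof
    fix Q assume Q: "Q \<in> {Q. \<forall>\<phi>\<in>{\<phi>. U \<phi> \<noteq> UNIV}. Q \<phi> = P \<phi>}"
    have "Q \<phi> \<in> U \<phi>" for \<phi>
      using U(1) Q by (cases "U \<phi> = UNIV") (auto simp: PiE_iff)
    then have "Q \<in> Pi\<^sub>E UNIV U" by (simp add: PiE_iff)
    then show "Q \<in> W" using U(2) by (rule subsetD[rotated])
  qed
  ultimately show ?thesis by blast
qed

lemma closedin_cantor_cube_prime_theories:
  "closedin cantor_cube {P. prime_theory \<Gamma> (Collect P)}"
proof -
  have coord: "closedin cantor_cube {P. P \<phi>}" "closedin cantor_cube {P. \<not> P \<phi>}" for \<phi>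
    using clopen_cantor_cube_coordinate(2)[of \<phi> "{True}"] clopen_cantor_cube_coordinate(2)[of \<phi> "{False}"]
    by simp_all
  have "{P. \<forall>a\<in>ICK \<Gamma>. P a} = (\<Inter>a\<in>ICK \<Gamma>. {P. P a})"
    by auto
  moreover have "ICK \<Gamma> \<noteq> {}"
    using ICK_Top by blast
  ultimately have ICK: "closedin cantor_cube {P. \<forall>a\<in>ICK \<Gamma>. P a}"
    using coord by (simp add: closedin_INT)
  have "{P. \<forall>a b. P a \<longrightarrow> P (Imp a b) \<longrightarrow> P b} =
      (\<Inter>a. \<Inter>b. {P. \<not> P a} \<union> {P. \<not> P (Imp a b)} \<union> {P. P b})"
    by auto
  then have mp: "closedin cantor_cube {P. \<forall>a b. P a \<longrightarrow> P (Imp a b) \<longrightarrow> P b}"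
    using coord by (simp add: closedin_INT closedin_Un)
  have "{P. \<forall>a b. P (Disj a b) \<longrightarrow> P a \<or> P b} =
      (\<Inter>a. \<Inter>b. {P. \<not> P (Disj a b)} \<union> {P. P a} \<union> {P. P b})"
    by auto
  then have prime: "closedin cantor_cube {P. \<forall>a b. P (Disj a b) \<longrightarrow> P a \<or> P b}"
    using coord by (simp add: closedin_INT closedin_Un)
  have "{P. prime_theory \<Gamma> (Collect P)} = {P. \<forall>a\<in>ICK \<Gamma>. P a}
      \<inter> {P. \<forall>a b. P a \<longrightarrow> P (Imp a b) \<longrightarrow> P b} \<inter> {P. \<not> P Bot}
      \<inter> {P. \<forall>a b. P (Disj a b) \<longrightarrow> P a \<or> P b}"
    unfolding prime_theory_def ick_theory_def by auto
  then show ?thesis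
    using ICK mp prime coord by (simp only: closedin_Int)
qed

lemma topspace_canonical_topology [simp]: "topspace (canonical_topology \<Gamma>) = prime_theories \<Gamma>"
  by (simp add: canonical_topology_def topspace_pullback_topology)

lemma openin_canonical_topology:
  "openin (canonical_topology \<Gamma>) U \<longleftrightarrow>
     (\<exists>W. openin cantor_cube W \<and> U = (\<lambda>T \<chi>. \<chi> \<in> T) -` W \<inter> prime_theories \<Gamma>)"
  by (simp add: canonical_topology_def openin_pullback_topology)

lemma compact_space_canonical_topology: "compact_space (canonical_topology \<Gamma>)"
proof -
  \<comment> \<open>\<open>Collect\<close> inverts \<open>\<lambda>T \<chi>. \<chi> \<in> T\<close>: a continuous image of a closed subset of the cube\<close>
  let ?E = "{P. prime_theory \<Gamma> (Collect P)}"
  have "compactin (subtopology cantor_cube ?E) ?E"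
    using closedin_compact_space[OF compact_space_cantor_cube closedin_cantor_cube_prime_theories]
    by simp
  moreover have "continuous_map (subtopology cantor_cube ?E) (canonical_topology \<Gamma>) Collect"
    unfolding canonical_topology_def
    by (rule continuous_map_pullback') (auto simp: o_def continuous_map_from_subtopology)
  ultimately have "compactin (canonical_topology \<Gamma>) (Collect ` ?E)"
    by (rule image_compactin)
  moreover have "Collect ` ?E = prime_theories \<Gamma>"
  proof
    show "prime_theories \<Gamma> \<subseteq> Collect ` ?E"
    proof
      fix T assume "T \<in> prime_theories \<Gamma>"
      then show "T \<in> Collect ` ?E" by (intro image_eqI[of _ _ "\<lambda>\<phi>. \<phi> \<in> T"]) auto
    qed
  qed auto
  ultimately show ?thesis
    by (simp add: compact_space_def)
qed

lemma openin_canonical_topology_coordinate: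
  "openin (canonical_topology \<Gamma>) ((\<lambda>T \<chi>. \<chi> \<in> T) -` {P. P \<phi> \<in> B} \<inter> prime_theories \<Gamma>)"
  unfolding openin_canonical_topology using clopen_cantor_cube_coordinate(1) by blast

lemma openin_truth_set: "openin (canonical_topology \<Gamma>) (truth_set \<Gamma> \<phi>)"
proof -
  have "truth_set \<Gamma> \<phi> = (\<lambda>T \<chi>. \<chi> \<in> T) -` {P. P \<phi> \<in> {True}} \<inter> prime_theories \<Gamma>"
    by auto
  then show ?thesis by (simp only: openin_canonical_topology_coordinate)
qed

lemma openin_truth_set_complement:
  "openin (canonical_topology \<Gamma>) (prime_theories \<Gamma> - truth_set \<Gamma> \<phi>)"
proof -
  have "prime_theories \<Gamma> - truth_set \<Gamma> \<phi> = (\<lambda>T \<chi>. \<chi> \<in> T) -` {P. P \<phi> \<in> {False}} \<inter> prime_theories \<Gamma>"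
    by auto
  then show ?thesis by (simp only: openin_canonical_topology_coordinate)
qed

lemma truth_set_subset: "truth_set \<Gamma> \<phi> \<subseteq> prime_theories \<Gamma>"
  by auto

lemma closedin_truth_set: "closedin (canonical_topology \<Gamma>) (truth_set \<Gamma> \<phi>)"
  unfolding closedin_def using openin_truth_set_complement truth_set_subset by simp

lemma closedin_truth_set_complement:
  "closedin (canonical_topology \<Gamma>) (prime_theories \<Gamma> - truth_set \<Gamma> \<phi>)"
  unfolding closedin_def using openin_truth_set truth_set_subset by (simp add: double_diff)

lemma canonical_topology_basis:
  assumes "openin (canonical_topology \<Gamma>) U" and "T \<in> U"
  shows "\<exists>a b. a \<in> T \<and> b \<notin> T \<and> truth_set \<Gamma> a - truth_set \<Gamma> b \<subseteq> U"
proof -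
  obtain W where W: "openin cantor_cube W" and U: "U = (\<lambda>T \<chi>. \<chi> \<in> T) -` W \<inter> prime_theories \<Gamma>"
    using assms(1) unfolding openin_canonical_topology by blast
  have T: "prime_theory \<Gamma> T" and "(\<lambda>\<phi>. \<phi> \<in> T) \<in> W"
    using assms(2) unfolding U by simp_all
  then obtain F where "finite F" and F: "{Q. \<forall>\<phi>\<in>F. Q \<phi> = (\<phi> \<in> T)} \<subseteq> W"
    using cantor_cube_basis[OF W] by blast
  obtain a where a: "\<And>S. ick_theory \<Gamma> S \<Longrightarrow> a \<in> S \<longleftrightarrow> F \<inter> T \<subseteq> S"
    using ick_theory_finite_conjunction[of "F \<inter> T"] \<open>finite F\<close> by blast
  obtain b where b: "\<And>S. prime_theory \<Gamma> S \<Longrightarrow> b \<in> S \<longleftrightarrow> (F - T) \<inter> S \<noteq> {}"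
    using prime_theory_finite_disjunction[of "F - T"] \<open>finite F\<close> by blast
  have "S \<in> U" if "S \<in> truth_set \<Gamma> a - truth_set \<Gamma> b" for S
  proof -
    have S: "prime_theory \<Gamma> S" and "a \<in> S" and "b \<notin> S"
      using that by simp_all
    then have "F \<inter> T \<subseteq> S" and "(F - T) \<inter> S = {}"
      using a[OF prime_theory_ick_theory[OF S]] b[OF S] by simp_all
    then have "\<forall>\<phi>\<in>F. (\<phi> \<in> S) = (\<phi> \<in> T)"
      by blast
    then have "(\<lambda>\<phi>. \<phi> \<in> S) \<in> W"
      using F by (simp add: subset_iff)
    then show ?thesis
      unfolding U using S by simp
  qed
  moreover have "a \<in> T" and "b \<notin> T"
    using a[OF prime_theory_ick_theory[OF T]] b[OF T] by auto
  ultimately show ?thesis by blast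
qed

text \<open>\<open>rel\<close> only matters at clopen upsets, which are truth sets; quantifying over all \<open>\<phi>\<close>
  with the given truth set makes it independent of the chosen representative.\<close>

definition canonical_space :: "form set \<Rightarrow> form set cspace" where
  "canonical_space \<Gamma> =
    \<lparr>topo = canonical_topology \<Gamma>,
     ord = (\<lambda>T U. prime_theory \<Gamma> T \<and> prime_theory \<Gamma> U \<and> T \<subseteq> U),
     rel = (\<lambda>a T U. prime_theory \<Gamma> T \<and> prime_theory \<Gamma> U \<and>
              (\<forall>\<phi> \<psi>. truth_set \<Gamma> \<phi> = a \<longrightarrow> Cond \<phi> \<psi> \<in> T \<longrightarrow> \<psi> \<in> U))\<rparr>"

lemma canonical_space_simps [simp]:
  "topo (canonical_space \<Gamma>) = canonical_topology \<Gamma>"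
  "ord (canonical_space \<Gamma>) T U \<longleftrightarrow> prime_theory \<Gamma> T \<and> prime_theory \<Gamma> U \<and> T \<subseteq> U"
  "rel (canonical_space \<Gamma>) a T U \<longleftrightarrow> prime_theory \<Gamma> T \<and> prime_theory \<Gamma> U \<and>
     (\<forall>\<phi> \<psi>. truth_set \<Gamma> \<phi> = a \<longrightarrow> Cond \<phi> \<psi> \<in> T \<longrightarrow> \<psi> \<in> U)"
  by (simp_all add: canonical_space_def)

lemma clopen_upset_truth_set: "clopen_upset (canonical_space \<Gamma>) (truth_set \<Gamma> \<phi>)"
  using openin_truth_set closedin_truth_set
  by (auto simp: clopen_upset_def clopen_def upset_def)

lemma open_upset_truth_set_neighbourhood:
  assumes up: "upset (canonical_space \<Gamma>) U" and "openin (canonical_topology \<Gamma>) U" and "T \<in> U"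
  shows "\<exists>\<phi>. T \<in> truth_set \<Gamma> \<phi> \<and> truth_set \<Gamma> \<phi> \<subseteq> U"
proof -
  have T: "prime_theory \<Gamma> T"
    using up \<open>T \<in> U\<close> by (auto simp: upset_def)
  have "prime_theories \<Gamma> - U \<subseteq> (\<Union>\<chi>\<in>T. prime_theories \<Gamma> - truth_set \<Gamma> \<chi>)"
  proof
    fix S assume S: "S \<in> prime_theories \<Gamma> - U"
    then have "\<not> T \<subseteq> S"
      using up \<open>T \<in> U\<close> T by (auto simp: upset_def)
    then show "S \<in> (\<Union>\<chi>\<in>T. prime_theories \<Gamma> - truth_set \<Gamma> \<chi>)"
      using S by auto
  qed
  moreover have "closedin (canonical_topology \<Gamma>) (prime_theories \<Gamma> - U)"
    using closedin_diff[OF closedin_topspace \<open>openin (canonical_topology \<Gamma>) U\<close>] by simp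
  ultimately have "\<exists>J. finite J \<and> J \<subseteq> T \<and>
      prime_theories \<Gamma> - U \<subseteq> (\<Union>\<chi>\<in>J. prime_theories \<Gamma> - truth_set \<Gamma> \<chi>)"
    by (intro compact_space_closedin_finite_subcover[OF compact_space_canonical_topology _
          openin_truth_set_complement])
  then obtain J where "finite J" "J \<subseteq> T"
    and J: "prime_theories \<Gamma> - U \<subseteq> (\<Union>\<chi>\<in>J. prime_theories \<Gamma> - truth_set \<Gamma> \<chi>)"
    by blast
  obtain \<phi> where \<phi>: "\<forall>S. ick_theory \<Gamma> S \<longrightarrow> (\<phi> \<in> S \<longleftrightarrow> J \<subseteq> S)"
    using ick_theory_finite_conjunction[OF \<open>finite J\<close>] by blast
  have "T \<in> truth_set \<Gamma> \<phi>"
    using \<phi> T \<open>J \<subseteq> T\<close> prime_theory_ick_theory by auto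
  moreover have "truth_set \<Gamma> \<phi> \<subseteq> U"
    using \<phi> J prime_theory_ick_theory by fastforce
  ultimately show ?thesis by blast
qed

lemma clopen_upset_canonical_space_iff:
  "clopen_upset (canonical_space \<Gamma>) U \<longleftrightarrow> (\<exists>\<phi>. U = truth_set \<Gamma> \<phi>)"
proof
  assume "clopen_upset (canonical_space \<Gamma>) U"
  then have U: "upset (canonical_space \<Gamma>) U" "openin (canonical_topology \<Gamma>) U"
    "closedin (canonical_topology \<Gamma>) U"
    by (simp_all add: clopen_upset_def clopen_def)
  have "\<forall>T\<in>U. \<exists>\<phi>. T \<in> truth_set \<Gamma> \<phi> \<and> truth_set \<Gamma> \<phi> \<subseteq> U"
    using open_upset_truth_set_neighbourhood[OF U(1,2)] by blast
  then obtain \<chi> where \<chi>: "\<forall>T\<in>U. T \<in> truth_set \<Gamma> (\<chi> T) \<and> truth_set \<Gamma> (\<chi> T) \<subseteq> U"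
    by (rule bchoice[elim_format]) blast
  then have "U \<subseteq> (\<Union>T\<in>U. truth_set \<Gamma> (\<chi> T))"
    by blast
  then have "\<exists>J. finite J \<and> J \<subseteq> U \<and> U \<subseteq> (\<Union>T\<in>J. truth_set \<Gamma> (\<chi> T))"
    by (rule compact_space_closedin_finite_subcover[OF compact_space_canonical_topology U(3) openin_truth_set])
  then obtain J where "finite J" "J \<subseteq> U" "U \<subseteq> (\<Union>T\<in>J. truth_set \<Gamma> (\<chi> T))"
    by blast
  then have U_eq: "U = (\<Union>T\<in>J. truth_set \<Gamma> (\<chi> T))"
    using \<chi> by blast
  obtain \<phi> where \<phi>: "\<And>S. prime_theory \<Gamma> S \<Longrightarrow> \<phi> \<in> S \<longleftrightarrow> \<chi> ` J \<inter> S \<noteq> {}"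
    using prime_theory_finite_disjunction[of "\<chi> ` J"] \<open>finite J\<close> by blast
  have "S \<in> U \<longleftrightarrow> S \<in> truth_set \<Gamma> \<phi>" for S
    by (cases "prime_theory \<Gamma> S") (auto simp: U_eq \<phi>)
  then show "\<exists>\<phi>. U = truth_set \<Gamma> \<phi>"
    by blast
qed (use clopen_upset_truth_set in blast)

lemma ICK_Imp_of_truth_set_subset:
  assumes "truth_set \<Gamma> \<phi> \<subseteq> truth_set \<Gamma> \<psi>"
  shows "Imp \<phi> \<psi> \<in> ICK \<Gamma>"
proof (rule ccontr)
  assume "Imp \<phi> \<psi> \<notin> ICK \<Gamma>"
  then obtain P where "prime_theory \<Gamma> P" "\<phi> \<in> P" "\<psi> \<notin> P"
    using prime_theory_Imp_witness[OF ick_theory_ICK_self] by blast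
  then show False
    using assms by auto
qed

lemma ICK_Iff_of_truth_set_eq: "truth_set \<Gamma> \<phi> = truth_set \<Gamma> \<psi> \<Longrightarrow> Iff \<phi> \<psi> \<in> ICK \<Gamma>"
  by (simp add: ICK_IffI ICK_Imp_of_truth_set_subset)

lemma downclosure_truth_set_diff:
  "downclosure (canonical_space \<Gamma>) (truth_set \<Gamma> a - truth_set \<Gamma> b) =
     prime_theories \<Gamma> - truth_set \<Gamma> (Imp a b)"
proof (rule set_eqI, rule iffI)
  fix T assume "T \<in> downclosure (canonical_space \<Gamma>) (truth_set \<Gamma> a - truth_set \<Gamma> b)"
  then obtain S where "prime_theory \<Gamma> T" "prime_theory \<Gamma> S" "T \<subseteq> S" "a \<in> S" "b \<notin> S"
    by (auto simp: downclosure_def)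
  then have "Imp a b \<notin> T"
    using ick_theory_mp[OF prime_theory_ick_theory[OF \<open>prime_theory \<Gamma> S\<close>]] by blast
  then show "T \<in> prime_theories \<Gamma> - truth_set \<Gamma> (Imp a b)"
    using \<open>prime_theory \<Gamma> T\<close> by simp
next
  fix T assume "T \<in> prime_theories \<Gamma> - truth_set \<Gamma> (Imp a b)"
  then have T: "prime_theory \<Gamma> T" and "Imp a b \<notin> T"
    by simp_all
  then obtain S where "prime_theory \<Gamma> S" "T \<subseteq> S" "a \<in> S" "b \<notin> S"
    using prime_theory_Imp_witness[OF prime_theory_ick_theory[OF T]] by blast
  then show "T \<in> downclosure (canonical_space \<Gamma>) (truth_set \<Gamma> a - truth_set \<Gamma> b)"
    unfolding downclosure_def using T by (intro CollectI conjI bexI[of _ S]) simp_all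
qed

lemma clopen_downclosure_canonical_space:
  assumes "clopen (canonical_space \<Gamma>) U"
  shows "clopen (canonical_space \<Gamma>) (downclosure (canonical_space \<Gamma>) U)"
proof -
  have U: "openin (canonical_topology \<Gamma>) U" "closedin (canonical_topology \<Gamma>) U"
    using assms by (simp_all add: clopen_def)
  obtain a b where ab: "\<And>T. T \<in> U \<Longrightarrow> a T \<in> T \<and> b T \<notin> T \<and> truth_set \<Gamma> (a T) - truth_set \<Gamma> (b T) \<subseteq> U"
    using canonical_topology_basis[OF U(1)] by metis
  have "U \<subseteq> (\<Union>T\<in>U. truth_set \<Gamma> (a T) - truth_set \<Gamma> (b T))"
    using ab openin_subset[OF U(1)] by fastforce
  then have "\<exists>J. finite J \<and> J \<subseteq> U \<and> U \<subseteq> (\<Union>T\<in>J. truth_set \<Gamma> (a T) - truth_set \<Gamma> (b T))"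
    by (rule compact_space_closedin_finite_subcover[OF compact_space_canonical_topology U(2)
          openin_diff[OF openin_truth_set closedin_truth_set]])
  then obtain J where "finite J" "J \<subseteq> U" "U \<subseteq> (\<Union>T\<in>J. truth_set \<Gamma> (a T) - truth_set \<Gamma> (b T))"
    by blast
  then have "U = (\<Union>T\<in>J. truth_set \<Gamma> (a T) - truth_set \<Gamma> (b T))"
    using ab by blast
  then have "downclosure (canonical_space \<Gamma>) U =
      (\<Union>T\<in>J. downclosure (canonical_space \<Gamma>) (truth_set \<Gamma> (a T) - truth_set \<Gamma> (b T)))"
    by (auto simp: downclosure_def)
  also have "\<dots> = (\<Union>T\<in>J. prime_theories \<Gamma> - truth_set \<Gamma> (Imp (a T) (b T)))"
    by (simp add: downclosure_truth_set_diff)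
  finally have down_eq: "downclosure (canonical_space \<Gamma>) U =
      (\<Union>T\<in>J. prime_theories \<Gamma> - truth_set \<Gamma> (Imp (a T) (b T)))" .
  have "openin (canonical_topology \<Gamma>) (\<Union>T\<in>J. prime_theories \<Gamma> - truth_set \<Gamma> (Imp (a T) (b T)))"
    using openin_truth_set_complement by blast
  moreover have "closedin (canonical_topology \<Gamma>) (\<Union>T\<in>J. prime_theories \<Gamma> - truth_set \<Gamma> (Imp (a T) (b T)))"
    using \<open>finite J\<close> closedin_truth_set_complement by (intro closedin_Union) auto
  ultimately show ?thesis
    unfolding clopen_def down_eq by simp
qed

lemma closedin_rel_image_canonical_space:
  assumes "prime_theory \<Gamma> T"
  shows "closedin (canonical_topology \<Gamma>) {U. rel (canonical_space \<Gamma>) a T U}"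
proof -
  let ?C = "{\<psi>. \<exists>\<phi>. truth_set \<Gamma> \<phi> = a \<and> Cond \<phi> \<psi> \<in> T}"
  have "{U. rel (canonical_space \<Gamma>) a T U} = \<Inter>(insert (prime_theories \<Gamma>) (truth_set \<Gamma> ` ?C))"
    using assms by auto
  moreover have "closedin (canonical_topology \<Gamma>) (\<Inter>(insert (prime_theories \<Gamma>) (truth_set \<Gamma> ` ?C)))"
    using closedin_truth_set closedin_topspace[of "canonical_topology \<Gamma>"] by (intro closedin_Inter) auto
  ultimately show ?thesis by simp
qed

lemma ord_image_subset_truth_set_iff:
  assumes T: "prime_theory \<Gamma> T"
  shows "{U. ord (canonical_space \<Gamma>) T U} \<inter> truth_set \<Gamma> \<phi> \<subseteq> truth_set \<Gamma> \<psi> \<longleftrightarrow> Imp \<phi> \<psi> \<in> T"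
proof
  assume "Imp \<phi> \<psi> \<in> T"
  show "{U. ord (canonical_space \<Gamma>) T U} \<inter> truth_set \<Gamma> \<phi> \<subseteq> truth_set \<Gamma> \<psi>"
  proof
    fix U assume "U \<in> {U. ord (canonical_space \<Gamma>) T U} \<inter> truth_set \<Gamma> \<phi>"
    then have U: "prime_theory \<Gamma> U" and "\<phi> \<in> U" "Imp \<phi> \<psi> \<in> U"
      using \<open>Imp \<phi> \<psi> \<in> T\<close> by auto
    then have "\<psi> \<in> U"
      by (rule ick_theory_mp[OF prime_theory_ick_theory])
    with U show "U \<in> truth_set \<Gamma> \<psi>"
      by simp
  qed
next
  assume ord_subset: "{U. ord (canonical_space \<Gamma>) T U} \<inter> truth_set \<Gamma> \<phi> \<subseteq> truth_set \<Gamma> \<psi>"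
  show "Imp \<phi> \<psi> \<in> T"
  proof (rule ccontr)
    assume "Imp \<phi> \<psi> \<notin> T"
    then obtain U where "prime_theory \<Gamma> U" "T \<subseteq> U" "\<phi> \<in> U" "\<psi> \<notin> U"
      using prime_theory_Imp_witness[OF prime_theory_ick_theory[OF T]] by blast
    then have "U \<in> truth_set \<Gamma> \<psi>"
      using ord_subset T by auto
    then show False
      using \<open>\<psi> \<notin> U\<close> by simp
  qed
qed

lemma rel_image_subset_truth_set_iff:
  assumes T: "prime_theory \<Gamma> T"
  shows "{U. rel (canonical_space \<Gamma>) (truth_set \<Gamma> \<phi>) T U} \<subseteq> truth_set \<Gamma> \<psi> \<longleftrightarrow> Cond \<phi> \<psi> \<in> T"
proof
  assume "Cond \<phi> \<psi> \<in> T"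
  then show "{U. rel (canonical_space \<Gamma>) (truth_set \<Gamma> \<phi>) T U} \<subseteq> truth_set \<Gamma> \<psi>"
    by auto
next
  assume rel_subset: "{U. rel (canonical_space \<Gamma>) (truth_set \<Gamma> \<phi>) T U} \<subseteq> truth_set \<Gamma> \<psi>"
  show "Cond \<phi> \<psi> \<in> T"
  proof (rule ccontr)
    assume "Cond \<phi> \<psi> \<notin> T"
    then obtain U where U: "prime_theory \<Gamma> U" "{c. Cond \<phi> c \<in> T} \<subseteq> U" "\<psi> \<notin> U"
      using lindenbaum[OF ick_theory_Cond_consequents[OF prime_theory_ick_theory[OF T]]] by blast
    have "\<psi>' \<in> U" if "truth_set \<Gamma> \<phi>' = truth_set \<Gamma> \<phi>" and "Cond \<phi>' \<psi>' \<in> T" for \<phi>' \<psi>'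
      using ick_theory_Cond_cong[OF prime_theory_ick_theory[OF T] ICK_Iff_of_truth_set_eq[OF that(1)] that(2)]
        U(2) by blast
    then have "rel (canonical_space \<Gamma>) (truth_set \<Gamma> \<phi>) T U"
      using T U(1) by simp
    then show False
      using rel_subset U(3) by auto
  qed
qed

lemma cond_esakia_space_canonical_space: "cond_esakia_space (canonical_space \<Gamma>)"
  unfolding cond_esakia_space_def esakia_space_def
proof (intro conjI allI impI ballI)
  show "compact_space (topo (canonical_space \<Gamma>))"
    by (simp add: compact_space_canonical_topology)
next
  fix T U assume "T \<in> carrier (canonical_space \<Gamma>)" "U \<in> carrier (canonical_space \<Gamma>)"
    and "\<not> ord (canonical_space \<Gamma>) T U"
  then obtain \<chi> where "\<chi> \<in> T" "\<chi> \<notin> U"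
    by auto
  then show "\<exists>V. clopen_upset (canonical_space \<Gamma>) V \<and> T \<in> V \<and> U \<notin> V"
    using clopen_upset_truth_set \<open>T \<in> carrier (canonical_space \<Gamma>)\<close>
    by (intro exI[of _ "truth_set \<Gamma> \<chi>"]) auto
next
  fix U assume "clopen (canonical_space \<Gamma>) U"
  then show "clopen (canonical_space \<Gamma>) (downclosure (canonical_space \<Gamma>) U)"
    by (rule clopen_downclosure_canonical_space)
next
  fix a b assume "clopen_upset (canonical_space \<Gamma>) a" "clopen_upset (canonical_space \<Gamma>) b"
  then obtain \<phi> \<psi> where a: "a = truth_set \<Gamma> \<phi>" and b: "b = truth_set \<Gamma> \<psi>"
    by (auto simp: clopen_upset_canonical_space_iff)
  have "{T \<in> carrier (canonical_space \<Gamma>). {U. rel (canonical_space \<Gamma>) a T U} \<subseteq> b} =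
      truth_set \<Gamma> (Cond \<phi> \<psi>)"
    unfolding a b using rel_image_subset_truth_set_iff by auto
  then show "clopen (canonical_space \<Gamma>)
      {T \<in> carrier (canonical_space \<Gamma>). {U. rel (canonical_space \<Gamma>) a T U} \<subseteq> b}"
    using clopen_upset_truth_set by (simp add: clopen_upset_def)
next
  fix a T assume "T \<in> carrier (canonical_space \<Gamma>)"
  then show "closedin (topo (canonical_space \<Gamma>)) {U. rel (canonical_space \<Gamma>) a T U}"
    using closedin_rel_image_canonical_space by simp
qed auto

lemma sem_canonical_space:
  "sem (canonical_space \<Gamma>) (\<lambda>n. truth_set \<Gamma> (s n)) \<chi> = truth_set \<Gamma> (subst s \<chi>)"
proof (induction \<chi>)
  case Bot
  then show ?case using prime_theory_Bot by auto
next
  case (Conj a b)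
  then show ?case using ick_theory_Conj_iff[OF prime_theory_ick_theory] by auto
next
  case (Disj a b)
  then show ?case using prime_theory_Disj_iff by auto
next
  case (Imp a b)
  have "sem (canonical_space \<Gamma>) (\<lambda>n. truth_set \<Gamma> (s n)) (Imp a b) =
      {T \<in> prime_theories \<Gamma>. {U. ord (canonical_space \<Gamma>) T U} \<inter> truth_set \<Gamma> (subst s a)
        \<subseteq> truth_set \<Gamma> (subst s b)}"
    unfolding sem.simps Imp.IH canonical_space_simps(1) topspace_canonical_topology by blast
  also have "\<dots> = truth_set \<Gamma> (subst s (Imp a b))" (is "?lhs = ?rhs")
  proof (rule set_eqI)
    fix T
    show "T \<in> ?lhs \<longleftrightarrow> T \<in> ?rhs"
      using ord_image_subset_truth_set_iff[of \<Gamma> T]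
      by (cases "prime_theory \<Gamma> T")
        (simp_all only: mem_Collect_eq mem_prime_theories mem_truth_set subst.simps simp_thms)
  qed
  finally show ?case .
next
  case (Cond a b)
  have "sem (canonical_space \<Gamma>) (\<lambda>n. truth_set \<Gamma> (s n)) (Cond a b) =
      {T \<in> prime_theories \<Gamma>. {U. rel (canonical_space \<Gamma>) (truth_set \<Gamma> (subst s a)) T U}
        \<subseteq> truth_set \<Gamma> (subst s b)}"
    unfolding sem.simps Cond.IH canonical_space_simps(1) topspace_canonical_topology by blast
  also have "\<dots> = truth_set \<Gamma> (subst s (Cond a b))" (is "?lhs = ?rhs")
  proof (rule set_eqI)
    fix T
    show "T \<in> ?lhs \<longleftrightarrow> T \<in> ?rhs"
      using rel_image_subset_truth_set_iff[of \<Gamma> T]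
      by (cases "prime_theory \<Gamma> T")
        (simp_all only: mem_Collect_eq mem_prime_theories mem_truth_set subst.simps simp_thms)
  qed
  finally show ?case .
qed simp

lemma subst_Var: "subst Var \<phi> = \<phi>"
  by (induction \<phi>) simp_all

lemma valid_canonical_space_iff: "valid (canonical_space \<Gamma>) \<phi> \<longleftrightarrow> \<phi> \<in> ICK \<Gamma>"
proof
  assume valid: "valid (canonical_space \<Gamma>) \<phi>"
  show "\<phi> \<in> ICK \<Gamma>"
  proof (rule ccontr)
    assume "\<phi> \<notin> ICK \<Gamma>"
    then obtain T where T: "prime_theory \<Gamma> T" "\<phi> \<notin> T"
      using lindenbaum[OF ick_theory_ICK_self] by blast
    have "\<forall>n. clopen_upset (canonical_space \<Gamma>) (truth_set \<Gamma> (Var n))"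
      using clopen_upset_truth_set by blast
    with valid have "\<forall>T\<in>prime_theories \<Gamma>. T \<in> sem (canonical_space \<Gamma>) (\<lambda>n. truth_set \<Gamma> (Var n)) \<phi>"
      unfolding valid_def by simp
    with T show False
      by (simp add: sem_canonical_space subst_Var)
  qed
next
  assume "\<phi> \<in> ICK \<Gamma>"
  show "valid (canonical_space \<Gamma>) \<phi>"
    unfolding valid_def
  proof (intro allI impI ballI)
    fix V :: "nat \<Rightarrow> form set set" and T
    assume "\<forall>n. clopen_upset (canonical_space \<Gamma>) (V n)" and T: "T \<in> carrier (canonical_space \<Gamma>)"
    then have "\<forall>n. \<exists>\<phi>. V n = truth_set \<Gamma> \<phi>"
      by (simp add: clopen_upset_canonical_space_iff)
    then obtain s where "\<forall>n. V n = truth_set \<Gamma> (s n)"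
      by (rule choice[elim_format]) blast
    then have V: "V = (\<lambda>n. truth_set \<Gamma> (s n))"
      by blast
    have "subst s \<phi> \<in> T"
      using T ick_theory_ICK[OF prime_theory_ick_theory ICK.usubst[OF \<open>\<phi> \<in> ICK \<Gamma>\<close>]] by simp
    with T show "T \<in> sem (canonical_space \<Gamma>) V \<phi>"
      unfolding V by (simp add: sem_canonical_space)
  qed
qed

theorem theorem4p24:
  fixes \<Gamma> :: "form set" and \<phi> :: form
  shows "(\<phi> \<in> ICK \<Gamma> \<longrightarrow>
            (\<forall>S :: 'a cspace. cond_esakia_space S \<and> (\<forall>\<gamma>\<in>\<Gamma>. valid S \<gamma>) \<longrightarrow> valid S \<phi>))
       \<and> ((\<forall>S :: form set cspace. cond_esakia_space S \<and> (\<forall>\<gamma>\<in>\<Gamma>. valid S \<gamma>) \<longrightarrow> valid S \<phi>)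
            \<longrightarrow> \<phi> \<in> ICK \<Gamma>)"
proof (intro conjI impI allI)
  fix S :: "'a cspace"
  assume "\<phi> \<in> ICK \<Gamma>" and "cond_esakia_space S \<and> (\<forall>\<gamma>\<in>\<Gamma>. valid S \<gamma>)"
  then show "valid S \<phi>"
    using ICK_sound by blast
next
  assume "\<forall>S :: form set cspace. cond_esakia_space S \<and> (\<forall>\<gamma>\<in>\<Gamma>. valid S \<gamma>) \<longrightarrow> valid S \<phi>"
  moreover have "\<forall>\<gamma>\<in>\<Gamma>. valid (canonical_space \<Gamma>) \<gamma>"
    by (simp add: valid_canonical_space_iff ICK.gamma)
  ultimately have "valid (canonical_space \<Gamma>) \<phi>"
    using cond_esakia_space_canonical_space by blast
  then show "\<phi> \<in> ICK \<Gamma>"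
    by (simp add: valid_canonical_space_iff)
qed

end
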